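(* Let $q\ge 2$ and $n\ge 2$ be integers and let $m=n-1$. Under uniform transmission over the $1$-deletion channel with input length $n$, $$\min_{{\boldsymbol y}\in\Sigma_q^{m}} \mathsf{H}^{\mathsf{In}}_{1\text{-}\mathsf{Del}}({\boldsymbol y}) = \log_2(nq)-\frac{\log_2 n}{q},$$ and this minimum is attained only by channel outputs having a single run (constant sequences).
   Context: $\Sigma_q=\{0,1,\dots,q-1\}$. For sequences ${\boldsymbol x}$ of length $N$ and ${\boldsymbol y}$ of length $\ell\le N$, the embedding number $\omega_{{\boldsymbol y}}({\boldsymbol x})$ is the number of index tuples $1\le i_1<\dots<i_\ell\le N$ with $x_{i_j}=y_j$ for all $j$. The $k$-deletion channel with input length $n$ maps ${\boldsymbol x}\in\Sigma_q^n$ to ${\boldsymbol y}\in\Sigma_q^{n-k}$ with probability $\Pr\{{\boldsymbol y}\mid{\boldsymbol x}\}=\omega_{{\boldsymbol y}}({\boldsymbol x})/\binom{n}{k}$. Under uniform transmission, the input $X$ is uniform on $\Sigma_q^n$, and for an output ${\boldsymbol y}$ the input entropy is $\mathsf{H}^{\mathsf{In}}_{k\text{-}\mathsf{Del}}({\boldsymbol y})=H(X\mid Y={\boldsymbol y})=-\sum_{{\boldsymbol x}}P({\boldsymbol x}\mid{\boldsymbol y})\log_2 P({\boldsymbol x}\mid{\boldsymbol y})$ where $P({\boldsymbol x}\mid {\boldsymbol y})=\Pr\{{\boldsymbol y}\mid{\boldsymbol x}\}/\sum_{{\boldsymbol x}'\in\Sigma_q^n}\Pr\{{\boldsymbol y}\mid{\boldsymbol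 x}'\}$. A run of a sequence is a maximal block of identical consecutive symbols. *)

theory Defs
  imports Complex_Main
begin

definition seqs :: "nat \<Rightarrow> nat \<Rightarrow> nat list set" where
  "seqs q n = {x. length x = n \<and> set x \<subseteq> {0..<q}}"

text \<open>Embedding number: number of increasing index tuples i_1<...<i_l
  (equivalently, index sets of size l) with x_{i_j} = y_j.\<close>
definition emb :: "nat list \<Rightarrow> nat list \<Rightarrow> nat" where
  "emb y x = card {I. I \<subseteq> {0..<length x} \<and> card I = length y \<and> nths x I = y}"

definition del_prob :: "nat \<Rightarrow> nat \<Rightarrow> nat list \<Rightarrow> nat list \<Rightarrow> real" where
  "del_prob n k y x = real (emb y x) / real (n choose k)"

text \<open>Posterior P(x | y) under uniform input on Sigma_q^n.\<close>
definition post :: "nat \<Rightarrow> nat \<Rightarrow> nat \<Rightarrow> nat list \<Rightarrow> nat list \<Rightarrow> real" where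
  "post q n k y x = del_prob n k y x / (\<Sum>x'\<in>seqs q n. del_prob n k y x')"

definition input_entropy :: "nat \<Rightarrow> nat \<Rightarrow> nat \<Rightarrow> nat list \<Rightarrow> real" where
  "input_entropy q n k y =
     - (\<Sum>x\<in>seqs q n. (let p = post q n k y x in if p = 0 then 0 else p * log 2 p))"

definition num_runs :: "nat list \<Rightarrow> nat" where
  "num_runs y = length (remdups_adj y)"

end

theory Submission
  imports Defs
begin

text \<open>
  Write \<open>n = m + 1\<close> and let \<open>e x\<close> be the number of positions whose deletion turns \<open>x\<close> into \<open>y\<close>;
  this is the embedding number of \<open>y\<close> in \<open>x\<close>. Counting the pairs \<open>(x, i)\<close> gives \<open>\<Sum>x. e x = n q\<close>,
  so \<open>P(x | y) = e x / (n q)\<close> and \<open>H(X | Y = y) = log (n q) - (\<Sum>x. e x log e x) / (n q)\<close>.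
  If \<open>i\<close> is a deletion position of \<open>x\<close> but not the least one, then \<open>x\<close> is obtained from \<open>y\<close>
  by duplicating \<open>y\<^sub>i\<^sub>-\<^sub>1\<close> at position \<open>i\<close>; hence \<open>i\<close> determines \<open>x\<close> and \<open>\<Sum>x. (e x - 1) \<le> n - 1\<close>.
  As \<open>t ln t / (t - 1)\<close> is increasing, \<open>e log e\<close> lies below the chord \<open>n log n (e - 1) / (n - 1)\<close>
  for \<open>e \<le> n\<close>, strictly unless \<open>e \<in> {0, 1, n}\<close>. Therefore \<open>\<Sum>x. e x log e x \<le> n log n\<close>,
  with equality iff some \<open>x\<close> has all \<open>n\<close> positions as deletion positions, i.e. iff \<open>y\<close> is constant.
\<close>

lemma ln_less_minus_one: "0 < x \<Longrightarrow> x \<noteq> 1 \<Longrightarrow> ln x < x - 1"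
  for x :: real
  using ln_le_minus_one ln_eq_minus_one by fastforce

lemma x_ln_x_div_strict_mono:
  fixes a b :: real
  assumes "1 < a" "a < b"
  shows "a * ln a / (a - 1) < b * ln b / (b - 1)"
proof (rule DERIV_pos_imp_increasing[OF assms(2)])
  fix x :: real
  assume "a \<le> x" "x \<le> b"
  then have x: "1 < x" using assms by simp
  have "DERIV (\<lambda>t. t * ln t / (t - 1)) x :> (x - 1 - ln x) / (x - 1)\<^sup>2"
    using x by (auto intro!: derivative_eq_intros simp: power2_eq_square field_simps)
  moreover have "(x - 1 - ln x) / (x - 1)\<^sup>2 > 0"
    using ln_less_minus_one[of x] x by simp
  ultimately show "\<exists>y. DERIV (\<lambda>t. t * ln t / (t - 1)) x :> y \<and> y > 0" by blast
qed

lemma nat_x_log_x_le_chord: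
  fixes e n :: nat
  assumes "e \<le> n"
  shows "real e * log 2 (real e) \<le> real n * log 2 (real n) / (real n - 1) * real (e - 1)"
    and "2 \<le> e \<Longrightarrow> e < n \<Longrightarrow>
      real e * log 2 (real e) < real n * log 2 (real n) / (real n - 1) * real (e - 1)"
proof -
  show strict: "real e * log 2 (real e) < real n * log 2 (real n) / (real n - 1) * real (e - 1)"
    if "2 \<le> e" "e < n"
  proof -
    have "real e * ln (real e) / (real e - 1) < real n * ln (real n) / (real n - 1)"
      using x_ln_x_div_strict_mono[of "real e" "real n"] that by simp
    then have "real e * ln (real e) < real n * ln (real n) / (real n - 1) * (real e - 1)"
      using that by (simp add: field_simps)
    then have "real e * ln (real e) / ln 2 < real n * ln (real n) / (real n - 1) * (real e - 1) / ln 2"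
      by (intro divide_strict_right_mono) auto
    then show ?thesis
      using that by (simp add: log_def of_nat_diff field_simps)
  qed
  consider "e \<le> 1" | "e = n" | "2 \<le> e" "e < n"
    using assms by linarith
  then show "real e * log 2 (real e) \<le> real n * log 2 (real n) / (real n - 1) * real (e - 1)"
  proof cases
    case 1
    then have "e = 0 \<or> e = 1" by auto
    then show ?thesis using assms by auto
  next
    case 2
    then show ?thesis by (cases n) auto
  next
    case 3
    then show ?thesis using strict by simp
  qed
qed

lemma x_log_x_eq_0_if_le_1: "e \<le> 1 \<Longrightarrow> real e * log 2 (real e) = 0"
  for e :: nat
  by (cases e) auto

lemma sum_chord_le:
  fixes e :: "'a \<Rightarrow> nat"
  assumes "(\<Sum>x\<in>S. e x - 1) \<le> n - 1"
  shows "(\<Sum>x\<in>S. real n * log 2 (real n) / (real n - 1) * real (e x - 1)) \<le> real n * log 2 (real n)"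
proof -
  have slope_nonneg: "0 \<le> real n * log 2 (real n) / (real n - 1)"
    by (cases n) (auto intro!: divide_nonneg_nonneg)
  have "(\<Sum>x\<in>S. real n * log 2 (real n) / (real n - 1) * real (e x - 1))
      = real n * log 2 (real n) / (real n - 1) * real (\<Sum>x\<in>S. e x - 1)"
    by (simp add: sum_distrib_left)
  also have "\<dots> \<le> real n * log 2 (real n) / (real n - 1) * real (n - 1)"
    by (rule mult_left_mono[OF of_nat_mono[OF assms] slope_nonneg])
  also have "\<dots> = real n * log 2 (real n)"
    by (cases n) auto
  finally show ?thesis .
qed

lemma sum_x_log_x_le:
  fixes e :: "'a \<Rightarrow> nat"
  assumes "\<forall>x\<in>S. e x \<le> n" "(\<Sum>x\<in>S. e x - 1) \<le> n - 1"
  shows "(\<Sum>x\<in>S. real (e x) * log 2 (real (e x))) \<le> real n * log 2 (real n)"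
proof -
  have "(\<Sum>x\<in>S. real (e x) * log 2 (real (e x)))
      \<le> (\<Sum>x\<in>S. real n * log 2 (real n) / (real n - 1) * real (e x - 1))"
    using assms(1) nat_x_log_x_le_chord(1) by (intro sum_mono) auto
  also have "\<dots> \<le> real n * log 2 (real n)"
    using assms(2) by (rule sum_chord_le)
  finally show ?thesis .
qed

lemma sum_x_log_x_eq_iff:
  fixes e :: "'a \<Rightarrow> nat"
  assumes "finite S" "2 \<le> n" "\<forall>x\<in>S. e x \<le> n" "(\<Sum>x\<in>S. e x - 1) \<le> n - 1"
  shows "(\<Sum>x\<in>S. real (e x) * log 2 (real (e x))) = real n * log 2 (real n) \<longleftrightarrow> (\<exists>x\<in>S. e x = n)"
proof
  assume "\<exists>x\<in>S. e x = n"
  then obtain x\<^sub>0 where x\<^sub>0: "x\<^sub>0 \<in> S" "e x\<^sub>0 = n" by blast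
  have "(\<Sum>x\<in>S. e x - 1) = (e x\<^sub>0 - 1) + (\<Sum>x\<in>S - {x\<^sub>0}. e x - 1)"
    using assms(1) x\<^sub>0 by (simp add: sum.remove)
  then have "(\<Sum>x\<in>S - {x\<^sub>0}. e x - 1) = 0"
    using assms(2,4) x\<^sub>0 by simp
  then have "\<forall>x\<in>S - {x\<^sub>0}. e x \<le> 1"
    using assms(1) by simp
  then have "(\<Sum>x\<in>S - {x\<^sub>0}. real (e x) * log 2 (real (e x))) = 0"
    by (simp add: x_log_x_eq_0_if_le_1)
  moreover have "(\<Sum>x\<in>S. real (e x) * log 2 (real (e x)))
      = real (e x\<^sub>0) * log 2 (real (e x\<^sub>0)) + (\<Sum>x\<in>S - {x\<^sub>0}. real (e x) * log 2 (real (e x)))"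
    using assms(1) x\<^sub>0 by (simp add: sum.remove)
  ultimately show "(\<Sum>x\<in>S. real (e x) * log 2 (real (e x))) = real n * log 2 (real n)"
    using x\<^sub>0 by simp
next
  assume eq: "(\<Sum>x\<in>S. real (e x) * log 2 (real (e x))) = real n * log 2 (real n)"
  show "\<exists>x\<in>S. e x = n"
  proof (rule ccontr)
    assume no_full: "\<not> (\<exists>x\<in>S. e x = n)"
    show False
    proof (cases "\<exists>a\<in>S. 2 \<le> e a")
      case True
      then obtain a where a: "a \<in> S" "2 \<le> e a" "e a < n"
        using assms(3) no_full by (meson le_neq_implies_less)
      have "real (e a) * log 2 (real (e a)) < real n * log 2 (real n) / (real n - 1) * real (e a - 1)"
        using nat_x_log_x_le_chord(2)[OF _ a(2,3)] a(3) by simp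
      then have "(\<Sum>x\<in>S. real (e x) * log 2 (real (e x)))
          < (\<Sum>x\<in>S. real n * log 2 (real n) / (real n - 1) * real (e x - 1))"
        using assms(1,3) a(1) nat_x_log_x_le_chord(1) by (intro sum_strict_mono_ex1) auto
      also have "\<dots> \<le> real n * log 2 (real n)"
        using assms(4) by (rule sum_chord_le)
      finally show False
        using eq by simp
    next
      case False
      then have "(\<Sum>x\<in>S. real (e x) * log 2 (real (e x))) = 0"
        by (intro sum.neutral ballI x_log_x_eq_0_if_le_1) auto
      moreover have "real n * log 2 (real n) > 0"
        using assms(2) by simp
      ultimately show False
        using eq by linarith
    qed
  qed
qed

definition delete_at :: "nat \<Rightarrow> 'a list \<Rightarrow> 'a list" where
  "delete_at i xs = take i xs @ drop (Suc i) xs"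

definition insert_at :: "nat \<Rightarrow> 'a \<Rightarrow> 'a list \<Rightarrow> 'a list" where
  "insert_at i c ys = take i ys @ c # drop i ys"

definition deletion_positions :: "'a list \<Rightarrow> 'a list \<Rightarrow> nat set" where
  "deletion_positions ys xs = {i. i < length xs \<and> delete_at i xs = ys}"

lemma nths_delete_at: "nths xs ({0..<length xs} - {i}) = delete_at i xs"
proof (induction xs arbitrary: i)
  case Nil
  then show ?case by (simp add: delete_at_def)
next
  case (Cons a xs)
  show ?case
  proof (cases i)
    case 0
    have "{j. Suc j \<in> {0..<length (a # xs)} - {0}} = {0..<length xs}" by auto
    then show ?thesis using 0 by (simp add: nths_Cons delete_at_def nths_all)
  next
    case (Suc k)
    have "{j. Suc j \<in> {0..<length (a # xs)} - {Suc k}} = {0..<length xs} - {k}" by auto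
    then show ?thesis using Suc Cons.IH[of k] by (simp add: nths_Cons delete_at_def)
  qed
qed

lemma nth_delete_at:
  "i < length xs \<Longrightarrow> k < length xs - 1 \<Longrightarrow> delete_at i xs ! k = (if k < i then xs ! k else xs ! Suc k)"
  by (auto simp: delete_at_def nth_append min_def)

lemma length_insert_at: "length (insert_at i c ys) = Suc (length ys)"
  by (simp add: insert_at_def)

lemma set_insert_at: "set (insert_at i c ys) = insert c (set ys)"
  by (metis insert_at_def append_take_drop_id set_append set_simps(2) Un_insert_right)

lemma delete_at_insert_at: "i \<le> length ys \<Longrightarrow> delete_at i (insert_at i c ys) = ys"
  by (simp add: insert_at_def delete_at_def)

lemma insert_at_delete_at: "i < length xs \<Longrightarrow> insert_at i (xs ! i) (delete_at i xs) = xs"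
  by (simp add: insert_at_def delete_at_def id_take_nth_drop[symmetric])

lemma delete_at_replicate: "i < n \<Longrightarrow> delete_at i (replicate n c) = replicate (n - 1) c"
  by (simp add: delete_at_def min_def flip: replicate_add)

lemma nth_eq_if_delete_at_eq:
  assumes "a < i" "i < length xs" "delete_at a xs = delete_at i xs"
  shows "xs ! (i - 1) = xs ! i"
proof -
  have "delete_at a xs ! (i - 1) = xs ! i" using assms by (subst nth_delete_at) auto
  moreover have "delete_at i xs ! (i - 1) = xs ! (i - 1)" using assms by (subst nth_delete_at) auto
  ultimately show ?thesis using assms by simp
qed

lemma finite_deletion_positions [simp]: "finite (deletion_positions ys xs)"
  by (simp add: deletion_positions_def)

lemma card_deletion_positions_le: "card (deletion_positions ys xs) \<le> length xs"
proof -
  have "deletion_positions ys xs \<subseteq> {0..<length xs}"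
    by (auto simp: deletion_positions_def)
  then show ?thesis
    using card_mono[of "{0..<length xs}"] by fastforce
qed

lemma emb_eq_card_deletion_positions:
  assumes "length x = Suc (length y)"
  shows "emb y x = card (deletion_positions y x)"
proof -
  let ?n = "length x"
  have "bij_betw (\<lambda>i. {0..<?n} - {i}) (deletion_positions y x)
          {I. I \<subseteq> {0..<?n} \<and> card I = length y \<and> nths x I = y}"
  proof (rule bij_betwI')
    fix i j
    assume "i \<in> deletion_positions y x" "j \<in> deletion_positions y x"
    then have "i < ?n" by (simp add: deletion_positions_def)
    show "({0..<?n} - {i} = {0..<?n} - {j}) = (i = j)"
    proof
      assume "{0..<?n} - {i} = {0..<?n} - {j}"
      then have "i \<notin> {0..<?n} - {j}" by blast
      then show "i = j" using \<open>i < ?n\<close> by simp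
    qed simp
  next
    fix i
    assume "i \<in> deletion_positions y x"
    then have "i < ?n" "nths x ({0..<?n} - {i}) = y"
      by (simp_all add: deletion_positions_def nths_delete_at)
    then show "{0..<?n} - {i} \<in> {I. I \<subseteq> {0..<?n} \<and> card I = length y \<and> nths x I = y}"
      using assms by auto
  next
    fix I
    assume "I \<in> {I. I \<subseteq> {0..<?n} \<and> card I = length y \<and> nths x I = y}"
    then have I: "I \<subseteq> {0..<?n}" "card I = length y" "nths x I = y" by auto
    then have "card ({0..<?n} - I) = 1"
      using assms by (simp add: card_Diff_subset finite_subset)
    then obtain i where i: "{0..<?n} - I = {i}" by (rule card_1_singletonE)
    then have "I = {0..<?n} - {i}" "i < ?n" using I(1) by auto
    then show "\<exists>i\<in>deletion_positions y x. I = {0..<?n} - {i}"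
      using I(3) nths_delete_at[of x i] by (auto simp: deletion_positions_def)
  qed
  then show ?thesis
    unfolding emb_def by (simp add: bij_betw_same_card)
qed

lemma finite_seqs: "finite (seqs q n)"
  using finite_lists_length_eq[of "{0..<q}" n] by (simp add: seqs_def conj_commute)

lemma sum_card_deletion_positions:
  assumes y: "y \<in> seqs q m"
  shows "(\<Sum>x\<in>seqs q (Suc m). card (deletion_positions y x)) = Suc m * q"
proof -
  have ly: "length y = m" and sy: "set y \<subseteq> {0..<q}" using y by (auto simp: seqs_def)
  have "bij_betw (\<lambda>(i, c). (insert_at i c y, i)) ({0..<Suc m} \<times> {0..<q})
          (Sigma (seqs q (Suc m)) (deletion_positions y))"
  proof (rule bij_betw_byWitness[where f' = "\<lambda>(x, i). (i, x ! i)"])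
    show "(\<lambda>(i, c). (insert_at i c y, i)) ` ({0..<Suc m} \<times> {0..<q})
        \<subseteq> Sigma (seqs q (Suc m)) (deletion_positions y)"
    proof
      fix p
      assume "p \<in> (\<lambda>(i, c). (insert_at i c y, i)) ` ({0..<Suc m} \<times> {0..<q})"
      then obtain i c where p: "p = (insert_at i c y, i)" "i < Suc m" "c < q" by auto
      have "insert_at i c y \<in> seqs q (Suc m)"
        using ly sy p by (simp add: seqs_def length_insert_at set_insert_at)
      moreover have "i \<in> deletion_positions y (insert_at i c y)"
        using ly p by (simp add: deletion_positions_def length_insert_at delete_at_insert_at)
      ultimately show "p \<in> Sigma (seqs q (Suc m)) (deletion_positions y)"
        using p by simp
    qed
    show "(\<lambda>(x, i). (i, x ! i)) ` Sigma (seqs q (Suc m)) (deletion_positions y)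
        \<subseteq> {0..<Suc m} \<times> {0..<q}"
      by (auto simp: seqs_def deletion_positions_def subset_iff)
    show "\<forall>p\<in>{0..<Suc m} \<times> {0..<q}. (\<lambda>(x, i). (i, x ! i)) ((\<lambda>(i, c). (insert_at i c y, i)) p) = p"
      using ly by (auto simp: insert_at_def nth_append)
    show "\<forall>p\<in>Sigma (seqs q (Suc m)) (deletion_positions y).
        (\<lambda>(i, c). (insert_at i c y, i)) ((\<lambda>(x, i). (i, x ! i)) p) = p"
      using insert_at_delete_at by (auto simp: deletion_positions_def)
  qed
  then have "card (Sigma (seqs q (Suc m)) (deletion_positions y)) = Suc m * q"
    by (simp flip: bij_betw_same_card)
  then show ?thesis
    using finite_seqs by simp
qed

lemma eq_insert_at_if_deletion_positions:
  assumes "a \<in> deletion_positions y x" "i \<in> deletion_positions y x" "a < i"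
  shows "x = insert_at i (y ! (i - 1)) y"
proof -
  have i: "i < length x" "delete_at i x = y" and a: "delete_at a x = y"
    using assms by (auto simp: deletion_positions_def)
  have "y ! (i - 1) = x ! (i - 1)"
    using i assms(3) nth_delete_at[of i x "i - 1"] by simp
  also have "\<dots> = x ! i"
    using nth_eq_if_delete_at_eq[of a i x] assms(3) i a by simp
  finally show ?thesis
    using insert_at_delete_at[OF i(1)] i(2) by simp
qed

lemma sum_card_deletion_positions_minus_one_le:
  assumes "finite X"
  shows "(\<Sum>x\<in>X. card (deletion_positions y x) - 1) \<le> length y"
proof -
  define E where "E x = deletion_positions y x - {Min (deletion_positions y x)}" for x
  have card_E: "card (deletion_positions y x) - 1 = card (E x)" for x
    by (cases "deletion_positions y x = {}") (simp_all add: E_def card_Diff_singleton)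
  have E: "Min (deletion_positions y x) < j" "x = insert_at j (y ! (j - 1)) y" if "j \<in> E x" for x j
  proof -
    have j: "j \<in> deletion_positions y x" "j \<noteq> Min (deletion_positions y x)"
      using that by (auto simp: E_def)
    then show less: "Min (deletion_positions y x) < j"
      using Min_le[OF finite_deletion_positions j(1)] by linarith
    have "Min (deletion_positions y x) \<in> deletion_positions y x"
      using j(1) by (intro Min_in) auto
    then show "x = insert_at j (y ! (j - 1)) y"
      using j(1) less by (rule eq_insert_at_if_deletion_positions)
  qed
  have "(\<Sum>x\<in>X. card (deletion_positions y x) - 1) = (\<Sum>x\<in>X. card (E x))"
    by (simp only: card_E)
  also have "\<dots> = card (Sigma X E)"
    using assms by (subst card_SigmaI) (auto simp: E_def)
  also have "\<dots> \<le> card {1..<Suc (length y)}"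
  proof (rule card_inj_on_le)
    show "inj_on snd (Sigma X E)"
    proof (rule inj_onI)
      fix p p'
      assume "p \<in> Sigma X E" "p' \<in> Sigma X E" "snd p = snd p'"
      then obtain x x' j where "p = (x, j)" "p' = (x', j)" "j \<in> E x" "j \<in> E x'"
        by auto
      then show "p = p'"
        using E(2)[of j x] E(2)[of j x'] by simp
    qed
    show "snd ` Sigma X E \<subseteq> {1..<Suc (length y)}"
    proof
      fix j
      assume "j \<in> snd ` Sigma X E"
      then obtain x where j: "j \<in> E x" by auto
      then have "j < length x"
        by (simp add: E_def deletion_positions_def)
      moreover have "0 < j"
        using E(1)[OF j] by simp
      moreover have "length x = Suc (length y)"
        using E(2)[OF j] by (simp add: length_insert_at)
      ultimately show "j \<in> {1..<Suc (length y)}" by simp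
    qed
  qed simp
  finally show ?thesis by simp
qed

lemma card_deletion_positions_replicate:
  "card (deletion_positions (replicate n c) (replicate (Suc n) c)) = Suc n"
proof -
  have "delete_at i (replicate (Suc n) c) = replicate n c" if "i < Suc n" for i
    using delete_at_replicate[OF that] by simp
  then have "deletion_positions (replicate n c) (replicate (Suc n) c) = {0..<Suc n}"
    unfolding deletion_positions_def by auto
  then show ?thesis by simp
qed

lemma replicate_if_card_deletion_positions_eq_length:
  assumes "card (deletion_positions y x) = length x" "x \<noteq> []"
  shows "y = replicate (length x - 1) (hd x)"
proof -
  have "deletion_positions y x \<subseteq> {0..<length x}"
    by (auto simp: deletion_positions_def)
  then have all: "deletion_positions y x = {0..<length x}"
    using card_subset_eq[OF finite_atLeastLessThan] assms(1) by simp
  have y: "delete_at i x = y" if "i < length x" for i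
  proof -
    have "i \<in> deletion_positions y x"
      using all that by simp
    then show ?thesis
      by (simp add: deletion_positions_def)
  qed
  have "x ! i = hd x" if "i < length x" for i
    using that
  proof (induction i)
    case 0
    then show ?case by (simp add: hd_conv_nth assms(2))
  next
    case (Suc i)
    then have "0 < length x" "Suc i < length x"
      by auto
    then have "delete_at 0 x = delete_at (Suc i) x"
      using y by metis
    then show ?case
      using Suc nth_eq_if_delete_at_eq[of 0 "Suc i" x] by simp
  qed
  then have x: "x = replicate (length x) (hd x)"
    by (simp add: list_eq_iff_nth_eq)
  have "y = delete_at 0 x"
    using y[of 0] assms(2) by simp
  also have "\<dots> = delete_at 0 (replicate (length x) (hd x))"
    by (rule arg_cong[OF x])
  also have "\<dots> = replicate (length x - 1) (hd x)"
    using assms(2) by (simp add: delete_at_replicate)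
  finally show ?thesis .
qed

lemma num_runs_eq_1_iff: "num_runs y = 1 \<longleftrightarrow> y \<noteq> [] \<and> y = replicate (length y) (hd y)"
  using remdups_adj_singleton_iff[of y] by (simp add: num_runs_def)

lemma ex_card_deletion_positions_eq_iff:
  assumes y: "y \<in> seqs q m" and "1 \<le> m"
  shows "(\<exists>x\<in>seqs q (Suc m). card (deletion_positions y x) = Suc m) \<longleftrightarrow> num_runs y = 1"
proof
  assume "\<exists>x\<in>seqs q (Suc m). card (deletion_positions y x) = Suc m"
  then obtain x where x: "length x = Suc m" "card (deletion_positions y x) = length x"
    by (auto simp: seqs_def)
  then have "x \<noteq> []"
    by auto
  then have "y = replicate m (hd x)"
    using replicate_if_card_deletion_positions_eq_length[OF x(2)] x(1) by simp
  then show "num_runs y = 1"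
    using assms by (simp add: num_runs_def remdups_adj_replicate)
next
  assume "num_runs y = 1"
  then have ne: "y \<noteq> []" and y_const: "y = replicate (length y) (hd y)"
    unfolding num_runs_eq_1_iff by blast+
  have "length y = m" "set y \<subseteq> {0..<q}"
    using y by (auto simp: seqs_def)
  then obtain c where c: "y = replicate m c" "c < q"
    using y_const hd_in_set[OF ne] by auto
  then have "replicate (Suc m) c \<in> seqs q (Suc m)"
    by (auto simp: seqs_def)
  moreover have "card (deletion_positions y (replicate (Suc m) c)) = Suc m"
    using c(1) card_deletion_positions_replicate by simp
  ultimately show "\<exists>x\<in>seqs q (Suc m). card (deletion_positions y x) = Suc m" by blast
qed

lemma input_entropy_single_deletion:
  assumes y: "y \<in> seqs q m" and "1 \<le> q"
  shows "input_entropy q (Suc m) 1 y = log 2 (real (Suc m) * real q)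
    - (\<Sum>x\<in>seqs q (Suc m). real (card (deletion_positions y x)) * log 2 (real (card (deletion_positions y x))))
      / (real (Suc m) * real q)"
proof -
  define e where "e x = real (card (deletion_positions y x))" for x
  define N where "N = real (Suc m) * real q"
  have N: "0 < N"
    using assms by (simp add: N_def)
  have sum_e: "(\<Sum>x\<in>seqs q (Suc m). e x) = N"
    using sum_card_deletion_positions[OF y] by (simp add: e_def N_def distrib_right flip: of_nat_sum)
  have del_prob: "del_prob (Suc m) 1 y x = e x / real (Suc m)" if "x \<in> seqs q (Suc m)" for x
    using that y by (simp add: del_prob_def emb_eq_card_deletion_positions e_def seqs_def)
  have "(\<Sum>x\<in>seqs q (Suc m). del_prob (Suc m) 1 y x) = (\<Sum>x\<in>seqs q (Suc m). e x / real (Suc m))"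
    using del_prob by (rule sum.cong[OF refl])
  also have "\<dots> = N / real (Suc m)"
    by (simp add: sum_e flip: sum_divide_distrib)
  finally have sum_del_prob: "(\<Sum>x\<in>seqs q (Suc m). del_prob (Suc m) 1 y x) = N / real (Suc m)" .
  have post: "post q (Suc m) 1 y x = e x / N" if "x \<in> seqs q (Suc m)" for x
    unfolding post_def sum_del_prob del_prob[OF that] using N by simp
  have entropy_term: "(let p = post q (Suc m) 1 y x in if p = 0 then 0 else p * log 2 p)
      = e x * log 2 (e x) / N - e x / N * log 2 N" if "x \<in> seqs q (Suc m)" for x
  proof (cases "e x = 0")
    case True
    then show ?thesis
      unfolding post[OF that] by simp
  next
    case False
    moreover have "0 \<le> e x"
      by (simp add: e_def)
    ultimately have "0 < e x"
      by simp
    then show ?thesis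
      unfolding post[OF that] using N by (simp add: log_divide field_simps)
  qed
  have "input_entropy q (Suc m) 1 y
      = - (\<Sum>x\<in>seqs q (Suc m). e x * log 2 (e x) / N - e x / N * log 2 N)"
    unfolding input_entropy_def using entropy_term by (simp cong: sum.cong)
  also have "\<dots> = (\<Sum>x\<in>seqs q (Suc m). e x) / N * log 2 N - (\<Sum>x\<in>seqs q (Suc m). e x * log 2 (e x)) / N"
    by (simp add: sum_subtractf sum_divide_distrib sum_distrib_right)
  also have "\<dots> = log 2 N - (\<Sum>x\<in>seqs q (Suc m). e x * log 2 (e x)) / N"
    using N by (simp add: sum_e)
  finally show ?thesis
    by (simp add: e_def N_def)
qed

lemma input_entropy_single_deletion_bounds:
  assumes y: "y \<in> seqs q m" and "1 \<le> q" "1 \<le> m"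
  shows "log 2 (real (Suc m) * real q) - log 2 (real (Suc m)) / real q \<le> input_entropy q (Suc m) 1 y"
    and "input_entropy q (Suc m) 1 y = log 2 (real (Suc m) * real q) - log 2 (real (Suc m)) / real q
      \<longleftrightarrow> num_runs y = 1"
proof -
  define G where "G = (\<Sum>x\<in>seqs q (Suc m).
    real (card (deletion_positions y x)) * log 2 (real (card (deletion_positions y x))))"
  define N where "N = real (Suc m) * real q"
  have card_le: "\<forall>x\<in>seqs q (Suc m). card (deletion_positions y x) \<le> Suc m"
  proof
    fix x
    assume "x \<in> seqs q (Suc m)"
    then show "card (deletion_positions y x) \<le> Suc m"
      using card_deletion_positions_le[of y x] by (simp add: seqs_def)
  qed
  have excess_le: "(\<Sum>x\<in>seqs q (Suc m). card (deletion_positions y x) - 1) \<le> Suc m - 1"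
    using sum_card_deletion_positions_minus_one_le[of "seqs q (Suc m)" y, OF finite_seqs] y
    by (simp add: seqs_def)
  have G_le: "G \<le> real (Suc m) * log 2 (real (Suc m))"
    unfolding G_def using card_le excess_le by (rule sum_x_log_x_le)
  have G_eq_iff: "G = real (Suc m) * log 2 (real (Suc m)) \<longleftrightarrow> num_runs y = 1"
    unfolding G_def
    using sum_x_log_x_eq_iff[OF finite_seqs _ card_le excess_le] ex_card_deletion_positions_eq_iff[OF assms(1,3)]
      assms(3) by simp
  have "0 < N"
    using assms(2) by (simp add: N_def)
  have H: "input_entropy q (Suc m) 1 y = log 2 N - G / N"
    unfolding G_def N_def by (rule input_entropy_single_deletion[OF assms(1,2)])
  have scale: "log 2 (real (Suc m)) / real q = real (Suc m) * log 2 (real (Suc m)) / N"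
    using assms(2) by (simp add: N_def)
  have "G / N \<le> real (Suc m) * log 2 (real (Suc m)) / N"
    using G_le \<open>0 < N\<close> by (simp add: divide_right_mono)
  then show "log 2 (real (Suc m) * real q) - log 2 (real (Suc m)) / real q \<le> input_entropy q (Suc m) 1 y"
    unfolding N_def[symmetric] H scale by linarith
  have "G / N = real (Suc m) * log 2 (real (Suc m)) / N \<longleftrightarrow> num_runs y = 1"
    using G_eq_iff \<open>0 < N\<close> by simp
  then show "input_entropy q (Suc m) 1 y = log 2 (real (Suc m) * real q) - log 2 (real (Suc m)) / real q
      \<longleftrightarrow> num_runs y = 1"
    unfolding N_def[symmetric] H scale by auto
qed

theorem theorem6:
  fixes q n m :: nat
  assumes "q \<ge> 2" and "n \<ge> 2" and "m = n - 1"
  shows "Min (input_entropy q n 1 ` seqs q m) = log 2 (real n * real q) - log 2 (real n) / real q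
    \<and> (\<forall>y\<in>seqs q m. input_entropy q n 1 y = Min (input_entropy q n 1 ` seqs q m)
           \<longleftrightarrow> num_runs y = 1)"
proof -
  define V where "V = log 2 (real n * real q) - log 2 (real n) / real q"
  have n: "n = Suc m" "1 \<le> m" "1 \<le> q"
    using assms by auto
  have lower: "V \<le> input_entropy q n 1 y" if "y \<in> seqs q m" for y
    using input_entropy_single_deletion_bounds(1)[OF that n(3,2)] by (simp add: V_def n(1))
  have attained_iff: "input_entropy q n 1 y = V \<longleftrightarrow> num_runs y = 1" if "y \<in> seqs q m" for y
    using input_entropy_single_deletion_bounds(2)[OF that n(3,2)] by (simp add: V_def n(1))
  have const: "replicate m 0 \<in> seqs q m" "num_runs (replicate m 0) = 1"
    using assms by (auto simp: seqs_def num_runs_def remdups_adj_replicate)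
  have min: "Min (input_entropy q n 1 ` seqs q m) = V"
  proof (rule Min_eqI)
    show "finite (input_entropy q n 1 ` seqs q m)"
      using finite_seqs by simp
    show "V \<le> h" if "h \<in> input_entropy q n 1 ` seqs q m" for h
      using that lower by blast
    have "input_entropy q n 1 (replicate m 0) = V"
      using attained_iff[OF const(1)] const(2) by simp
    then show "V \<in> input_entropy q n 1 ` seqs q m"
      using const(1) by (rule image_eqI[OF sym])
  qed
  show ?thesis
    unfolding min V_def[symmetric] using attained_iff by blast
qed

end
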